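(* For an integer $n\geq 0$ and $z\in\mathbb{C}$, let $$\mathcal{T}_n(z) := \sum_{m=0}^n \binom{n}{m} m^m\,(n-m+z)^{n-m}$$ (with $0^0\equiv 1$), and let $\Gamma(a,x)=\int_x^\infty t^{a-1}e^{-t}\,dt$ denote the (upper) incomplete Gamma function, $\mathrm{Re}(a)>0$. Then $$\mathcal{T}_n(z) = e^{z+n}\, \Gamma(n+1,z+n).$$
   Context: Convention: $0^0\equiv1$. For $a=n+1$ with $n$ a nonnegative integer, the integrand $t^{n}e^{-t}$ is entire, so $\Gamma(n+1,x)=\int_x^\infty t^{n}e^{-t}\,dt$ is well defined for complex $x$ by integrating along any path from $x$ to $+\infty$ (e.g. a horizontal ray to the right). *)

theory Defs
  imports "HOL-Analysis.Analysis"
begin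

text \<open>T_n(z) = sum_{m=0}^n binom(n,m) m^m (n-m+z)^(n-m); note that 0^0 = 1 holds for ^ in Isabelle.\<close>
definition T_poly :: "nat \<Rightarrow> complex \<Rightarrow> complex" where
  "T_poly n z = (\<Sum>m=0..n. of_nat (n choose m) * (of_nat m) ^ m * (of_nat (n - m) + z) ^ (n - m))"

text \<open>Upper incomplete Gamma function Gamma(n+1, x) for a nonnegative integer n and complex x,
  integrating t^n e^(-t) along the horizontal ray from x to +infinity: t = x + s, s in [0, infinity).\<close>
definition inc_Gamma_nat :: "nat \<Rightarrow> complex \<Rightarrow> complex" where
  "inc_Gamma_nat n x = integral {0..} (\<lambda>s::real. (x + of_real s) ^ n * exp (- (x + of_real s)))"

end

theory Submission
  imports Defs
begin

text \<open>Expanding \<open>(x + s)^n\<close> binomially and integrating term by term against \<open>e^{-s}\<close> gives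
  \<open>e^x \<Gamma>(n+1, x) = \<Sum>_{k\<le>n} n!/k! x^k\<close>. Both this truncated exponential series, shifted to
  \<open>z + n\<close>, and \<open>T_n(z)\<close> satisfy \<open>F_{n+1}'(z) = (n+1) F_n(z+1)\<close>, so by induction on \<open>n\<close> it
  suffices that they agree at \<open>z = -n\<close>. There the series is \<open>n!\<close>, while
  \<open>T_n(-n) = (-1)^n \<Sum>_m (-1)^m binom(n,m) m^n\<close> is an \<open>n\<close>-th finite difference of the
  monomial \<open>m^n\<close>, which is also \<open>n!\<close>.\<close>

lemma integral_power_times_exp_neg: "((\<lambda>s::real. s ^ j * exp (- s)) has_integral fact j) {0..}"
proof -
  have "((\<lambda>t. t powr (real (Suc j) - 1) / exp t) has_integral Gamma (real (Suc j))) {0..}"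
    by (rule Gamma_integral_real) simp
  moreover have "Gamma (real (Suc j)) = fact j"
    using Gamma_fact[of j] by (simp add: add.commute)
  ultimately have "((\<lambda>t. t powr real j / exp t) has_integral fact j) {0..}"
    by simp
  then show ?thesis
    by (rule has_integral_spike[where S = "{0}", rotated 2])
      (auto simp: powr_realpow exp_minus field_simps)
qed

definition fact_exp_trunc :: "nat \<Rightarrow> 'a::real_normed_field \<Rightarrow> 'a" where
  "fact_exp_trunc n w = (\<Sum>k\<le>n. fact n / fact k * w ^ k)"

lemma inc_Gamma_nat_eq: "inc_Gamma_nat n x = exp (- x) * fact_exp_trunc n x"
proof -
  let ?a = "\<lambda>k. exp (- x) * of_nat (n choose k) * x ^ k"
  have expand: "(x + of_real s) ^ n * exp (- (x + of_real s))
      = (\<Sum>k\<le>n. ?a k * of_real (s ^ (n - k) * exp (- s)))" for s :: real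
    by (simp add: binomial_ring[of x] exp_diff exp_minus sum_distrib_left sum_distrib_right
        exp_of_real[symmetric] field_simps)
  have "((\<lambda>s::real. \<Sum>k\<le>n. ?a k * of_real (s ^ (n - k) * exp (- s)))
      has_integral (\<Sum>k\<le>n. ?a k * of_real (fact (n - k)))) {0..}"
    by (intro has_integral_sum has_integral_mult_right has_integral_of_real
        integral_power_times_exp_neg) auto
  then have "inc_Gamma_nat n x = (\<Sum>k\<le>n. ?a k * fact (n - k))"
    unfolding inc_Gamma_nat_def expand by (simp add: integral_unique)
  also have "\<dots> = exp (- x) * fact_exp_trunc n x"
    unfolding fact_exp_trunc_def sum_distrib_left
    by (intro sum.cong) (auto simp: binomial_fact field_simps)
  finally show ?thesis .
qed

lemma fact_exp_trunc_Suc_deriv: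
  "(fact_exp_trunc (Suc n) has_field_derivative of_nat (Suc n) * fact_exp_trunc n w) (at w)"
proof -
  have "(fact_exp_trunc (Suc n) has_field_derivative
      (\<Sum>k\<le>Suc n. fact (Suc n) / fact k * (of_nat k * w ^ (k - 1)))) (at w)"
    unfolding fact_exp_trunc_def[abs_def] by (intro DERIV_sum) (auto intro!: derivative_eq_intros)
  moreover have "(\<Sum>k\<le>Suc n. fact (Suc n) / fact k * (of_nat k * w ^ (k - 1)))
      = (\<Sum>k\<le>n. fact (Suc n) / fact (Suc k) * (of_nat (Suc k) * w ^ k))"
    by (subst sum.atMost_Suc_shift) simp
  moreover have "\<dots> = of_nat (Suc n) * fact_exp_trunc n w"
    unfolding fact_exp_trunc_def sum_distrib_left
    by (intro sum.cong) (simp_all del: of_nat_Suc add: field_simps)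
  ultimately show ?thesis by simp
qed

definition alt_binomial_sum :: "nat \<Rightarrow> (nat \<Rightarrow> 'a::comm_ring_1) \<Rightarrow> 'a" where
  "alt_binomial_sum n f = (\<Sum>m\<le>n. (-1) ^ m * of_nat (n choose m) * f m)"

lemma alt_binomial_sum_Suc:
  "alt_binomial_sum (Suc n) f = alt_binomial_sum n f - alt_binomial_sum n (\<lambda>m. f (Suc m))"
proof -
  have tail: "(\<Sum>k\<le>n. (-1) ^ Suc k * of_nat (n choose Suc k) * f (Suc k))
      = alt_binomial_sum n f - f 0"
  proof -
    have "alt_binomial_sum n f = (\<Sum>m\<le>Suc n. (-1) ^ m * of_nat (n choose m) * f m)"
      by (simp add: alt_binomial_sum_def binomial_eq_0)
    also have "\<dots> = f 0 + (\<Sum>k\<le>n. (-1) ^ Suc k * of_nat (n choose Suc k) * f (Suc k))"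
      by (subst sum.atMost_Suc_shift) simp
    finally show ?thesis by simp
  qed
  have "alt_binomial_sum (Suc n) f
      = f 0 + (\<Sum>k\<le>n. (-1) ^ Suc k * of_nat ((n choose k) + (n choose Suc k)) * f (Suc k))"
    unfolding alt_binomial_sum_def by (subst sum.atMost_Suc_shift) simp
  also have "\<dots> = f 0 - alt_binomial_sum n (\<lambda>m. f (Suc m))
      + (\<Sum>k\<le>n. (-1) ^ Suc k * of_nat (n choose Suc k) * f (Suc k))"
    unfolding alt_binomial_sum_def by (simp add: ring_distribs sum_subtractf sum_negf)
  finally show ?thesis unfolding tail by simp
qed

lemma alt_binomial_sum_diff:
  "alt_binomial_sum n (\<lambda>m. f m - g m) = alt_binomial_sum n f - alt_binomial_sum n g"
  unfolding alt_binomial_sum_def by (simp add: sum_subtractf[symmetric] algebra_simps)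

lemma alt_binomial_sum_sum:
  "alt_binomial_sum n (\<lambda>m. \<Sum>i\<in>I. c i * g i m) = (\<Sum>i\<in>I. c i * alt_binomial_sum n (g i))"
  unfolding alt_binomial_sum_def
  by (simp add: sum_distrib_left sum_distrib_right mult_ac sum.swap[of _ I])

lemma alt_binomial_sum_power:
  assumes "j \<le> n"
  shows "alt_binomial_sum n (\<lambda>m. of_nat m ^ j)
    = (if j = n then (-1) ^ n * fact n else (0::'a::{comm_ring_1,ring_char_0}))"
  using assms
proof (induction n arbitrary: j)
  case 0
  then show ?case by (simp add: alt_binomial_sum_def)
next
  case (Suc n)
  have binomial_step: "(\<lambda>m. of_nat (Suc m) ^ j - of_nat m ^ j)
      = (\<lambda>m. \<Sum>i<j. of_nat (j choose i) * (of_nat m ^ i :: 'a))"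
  proof
    fix m
    have "(of_nat m + 1 :: 'a) ^ j = (\<Sum>i<j. of_nat (j choose i) * of_nat m ^ i) + of_nat m ^ j"
      by (simp add: binomial_ring lessThan_Suc_atMost[symmetric])
    then show "of_nat (Suc m) ^ j - of_nat m ^ j = (\<Sum>i<j. of_nat (j choose i) * (of_nat m ^ i :: 'a))"
      by (simp add: add.commute)
  qed
  have "alt_binomial_sum (Suc n) (\<lambda>m. of_nat m ^ j)
      = - alt_binomial_sum n (\<lambda>m. of_nat (Suc m) ^ j - (of_nat m ^ j :: 'a))"
    by (simp add: alt_binomial_sum_Suc alt_binomial_sum_diff)
  also have "\<dots> = - (\<Sum>i<j. of_nat (j choose i) * alt_binomial_sum n (\<lambda>m. of_nat m ^ i :: 'a))"
    unfolding binomial_step alt_binomial_sum_sum ..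
  also have "\<dots> = - (\<Sum>i<j. of_nat (j choose i) * (if i = n then (-1) ^ n * fact n else 0))"
    using Suc by (intro arg_cong[where f=uminus] sum.cong) auto
  also have "\<dots> = (if j = Suc n then (-1) ^ Suc n * fact (Suc n) else 0)"
    using Suc.prems by (auto simp: sum.delta algebra_simps)
  finally show ?case .
qed

lemma T_poly_at_minus: "T_poly n (- of_nat n) = fact n"
proof -
  have "T_poly n (- of_nat n) = (\<Sum>m\<le>n. (-1) ^ n * ((-1) ^ m * of_nat (n choose m) * of_nat m ^ n))"
    unfolding T_poly_def atLeast0AtMost
  proof (rule sum.cong)
    fix m assume "m \<in> {..n}"
    then have "m \<le> n" by simp
    then have "of_nat (n - m) + - of_nat n = - (of_nat m :: complex)"
      and "(-1) ^ (n - m) = (-1) ^ n * ((-1) ^ m :: complex)"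
      and "of_nat m ^ m * of_nat m ^ (n - m) = (of_nat m ^ n :: complex)"
      by (simp_all add: of_nat_diff neg_one_power_add_eq_neg_one_power_diff[symmetric]
          power_add[symmetric])
    then show "of_nat (n choose m) * of_nat m ^ m * (of_nat (n - m) + - of_nat n) ^ (n - m)
        = (-1) ^ n * ((-1) ^ m * of_nat (n choose m) * (of_nat m ^ n :: complex))"
      by (simp add: power_minus[of "of_nat m"] mult_ac)
  qed simp
  also have "\<dots> = (-1) ^ n * alt_binomial_sum n (\<lambda>m. of_nat m ^ n)"
    by (simp add: alt_binomial_sum_def sum_distrib_left)
  also have "\<dots> = fact n"
    by (simp add: alt_binomial_sum_power)
  finally show ?thesis .
qed

lemma T_poly_Suc_deriv:
  "(T_poly (Suc n) has_field_derivative of_nat (Suc n) * T_poly n (z + 1)) (at z)"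
proof -
  let ?c = "\<lambda>m. of_nat (Suc n choose m) * (of_nat m ^ m :: complex)"
  let ?d = "\<lambda>m. ?c m * (of_nat (Suc n - m) * (of_nat (Suc n - m) + z) ^ (Suc n - m - 1))"
  have "(T_poly (Suc n) has_field_derivative (\<Sum>m\<in>{0..Suc n}. ?d m)) (at z)"
    unfolding T_poly_def[abs_def] by (intro DERIV_sum) (auto intro!: derivative_eq_intros)
  moreover have "(\<Sum>m\<in>{0..Suc n}. ?d m) = (\<Sum>m\<in>{0..n}. ?d m)"
    by (subst sum.atLeast0_atMost_Suc) simp
  moreover have "(\<Sum>m\<in>{0..n}. ?d m) = of_nat (Suc n) * T_poly n (z + 1)"
    unfolding T_poly_def sum_distrib_left
  proof (rule sum.cong)
    fix m assume "m \<in> {0..n}"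
    then have "Suc n - m - 1 = n - m" and "of_nat (Suc n - m) + z = of_nat (n - m) + (z + 1)"
      by (simp_all add: Suc_diff_le of_nat_diff)
    moreover have "of_nat (Suc n - m) * of_nat (Suc n choose m)
        = (of_nat (Suc n) * of_nat (n choose m) :: complex)"
      using binomial_absorb_comp[of "Suc n" m] by (metis diff_Suc_1 of_nat_mult)
    ultimately show "?d m
        = of_nat (Suc n) * (of_nat (n choose m) * of_nat m ^ m * (of_nat (n - m) + (z + 1)) ^ (n - m))"
      by (metis (no_types, lifting) mult.assoc mult.left_commute)
  qed simp
  ultimately show ?thesis
    by simp
qed

lemma T_poly_eq_fact_exp_trunc: "T_poly n z = fact_exp_trunc n (z + of_nat n)"
proof (induction n arbitrary: z)
  case 0
  then show ?case by (simp add: T_poly_def fact_exp_trunc_def)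
next
  case (Suc n)
  define G where "G z = T_poly (Suc n) z - fact_exp_trunc (Suc n) (z + of_nat (Suc n))" for z
  have "(G has_field_derivative 0) (at z)" for z
  proof -
    have "((\<lambda>z. fact_exp_trunc (Suc n) (z + of_nat (Suc n))) has_field_derivative
        of_nat (Suc n) * fact_exp_trunc n (z + of_nat (Suc n))) (at z)"
      using DERIV_chain2[OF fact_exp_trunc_Suc_deriv DERIV_add[OF DERIV_ident DERIV_const]] by simp
    from DERIV_diff[OF T_poly_Suc_deriv[of n z] this] show ?thesis
      unfolding G_def[abs_def] using Suc.IH[of "z + 1"] by (simp add: algebra_simps)
  qed
  then obtain c where "G z = c" for z
    using has_field_derivative_zero_constant[of UNIV G] by auto
  moreover have "G (- of_nat (Suc n)) = 0"
    unfolding G_def using T_poly_at_minus[of "Suc n"] by (simp add: fact_exp_trunc_def)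
  ultimately show ?case
    unfolding G_def by (metis eq_iff_diff_eq_0)
qed

theorem proposition5:
  fixes n :: nat and z :: complex
  shows "T_poly n z = exp (z + of_nat n) * inc_Gamma_nat n (z + of_nat n)"
  unfolding inc_Gamma_nat_eq T_poly_eq_fact_exp_trunc mult.assoc[symmetric] exp_minus_inverse by simp

end
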